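(* Let $A=A_s+A_d\epsilon\in\mathbb{DC}^{m\times n}$ with SVD $A=U\Sigma V^*$, $U\in\mathbb{DC}^{m\times m}$, $V\in\mathbb{DC}^{n\times n}$ unitary dual complex matrices, and $$\Sigma=\begin{bmatrix}\Sigma_{1s}&&\\&O&\\&&O\end{bmatrix}+\begin{bmatrix}\Sigma_{1d}&&\\&\Sigma_{2d}&\\&&O\end{bmatrix}\epsilon,$$ where $\Sigma_1=\Sigma_{1s}+\Sigma_{1d}\epsilon=\mathrm{diag}(\mu_1,\dots,\mu_r)$ with $\mu_1\ge\dots\ge\mu_r$ positive appreciable dual real numbers and $\Sigma_{2d}\epsilon=\mathrm{diag}(\mu_{r+1},\dots,\mu_t)$ with $\mu_{r+1}\ge\dots\ge\mu_t$ positive infinitesimal dual real numbers, $r\le t\le\min\{m,n\}$. Let $A^G=V\begin{bmatrix}\Sigma_1^{-1}&O\\O&O\end{bmatrix}U^*$. Then $$A^G\in\arg\min_{X\in\mathbb{DC}^{n\times m}}\|AXA-A\|_F,$$ where the minimum is taken with respect to the total order on dual real numbers; moreover $A^G$ is the minimizer of minimal Frobenius norm among all minimizers, and the optimal value is $\|AA^GA-A\|_F=\|\Sigma_{2d}\|_F\,\epsilon$. In particular, if all nonzero singular values of $A$ are appreciable ($r=t$), then $AA^GA=A$.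
   Context: A dual number is $a=a_s+a_d\epsilon$ where $\epsilon\neq0$, $\epsilon^2=0$, and $\epsilon$ commutes with real/complex numbers; it is appreciable if $a_s\neq0$ and infinitesimal otherwise. Dual reals are totally ordered by: $a>b$ iff $a_s>b_s$, or $a_s=b_s$ and $a_d>b_d$. For appreciable $\mu$, $\mu^{-1}=\mu_s^{-1}-\mu_s^{-2}\mu_d\epsilon$. For a dual complex matrix $A=A_s+A_d\epsilon$, $A^*=A_s^*+A_d^*\epsilon$; unitary means $U^*U=UU^*=I$. The Frobenius norm of a dual complex matrix is the nonnegative dual real number $\|A\|_F=\|A_s\|_F+\frac{\mathrm{tr}(A_s^*A_d+A_d^*A_s)}{2\|A_s\|_F}\epsilon$ if $A_s\neq O$, and $\|A\|_F=\|A_d\|_F\epsilon$ if $A_s=O$. Every $A\in\mathbb{DC}^{m\times n}$ has an SVD of the stated form with unique singular values $\mu_1,\dots,\mu_t$ (with multiplicities). *)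

theory Defs
  imports Complex_Main "Jordan_Normal_Form.Matrix"
begin

text \<open>Dual real numbers a = a_s + a_d eps, represented as pairs (a_s, a_d).\<close>
type_synonym dreal = "real \<times> real"

definition dr_le :: "dreal \<Rightarrow> dreal \<Rightarrow> bool" where
  "dr_le a b \<longleftrightarrow> fst a < fst b \<or> (fst a = fst b \<and> snd a \<le> snd b)"

definition dr_less :: "dreal \<Rightarrow> dreal \<Rightarrow> bool" where
  "dr_less a b \<longleftrightarrow> fst a < fst b \<or> (fst a = fst b \<and> snd a < snd b)"

definition dr_inv :: "dreal \<Rightarrow> dreal" where
  "dr_inv a = (1 / fst a, - snd a / (fst a)\<^sup>2)"

text \<open>Dual complex matrices A = A_s + A_d eps, represented as pairs (A_s, A_d)
  of complex matrices of the same dimension.\<close>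
type_synonym dcmat = "complex mat \<times> complex mat"

definition dcmat_carrier :: "nat \<Rightarrow> nat \<Rightarrow> dcmat set" where
  "dcmat_carrier m n = {A. fst A \<in> carrier_mat m n \<and> snd A \<in> carrier_mat m n}"

definition dc_mult :: "dcmat \<Rightarrow> dcmat \<Rightarrow> dcmat" where
  "dc_mult A B = (fst A * fst B, fst A * snd B + snd A * fst B)"

definition dc_minus :: "dcmat \<Rightarrow> dcmat \<Rightarrow> dcmat" where
  "dc_minus A B = (fst A - fst B, snd A - snd B)"

definition cadj :: "complex mat \<Rightarrow> complex mat" where
  "cadj M = mat (dim_col M) (dim_row M) (\<lambda>(i,j). cnj (M $$ (j,i)))"

definition dc_adj :: "dcmat \<Rightarrow> dcmat" where
  "dc_adj A = (cadj (fst A), cadj (snd A))"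

definition dc_id :: "nat \<Rightarrow> dcmat" where
  "dc_id n = (1\<^sub>m n, 0\<^sub>m n n)"

definition dc_unitary :: "nat \<Rightarrow> dcmat \<Rightarrow> bool" where
  "dc_unitary n U \<longleftrightarrow> U \<in> dcmat_carrier n n \<and>
     dc_mult (dc_adj U) U = dc_id n \<and> dc_mult U (dc_adj U) = dc_id n"

definition cfro :: "complex mat \<Rightarrow> real" where
  "cfro M = sqrt (\<Sum>i<dim_row M. \<Sum>j<dim_col M. (cmod (M $$ (i,j)))\<^sup>2)"

definition ctrace :: "complex mat \<Rightarrow> complex" where
  "ctrace M = (\<Sum>i<dim_row M. M $$ (i,i))"

definition dc_fro :: "dcmat \<Rightarrow> dreal" where
  "dc_fro A = (if fst A \<noteq> 0\<^sub>m (dim_row (fst A)) (dim_col (fst A))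
     then (cfro (fst A),
           Re (ctrace (cadj (fst A) * snd A + cadj (snd A) * fst A)) / (2 * cfro (fst A)))
     else (0, cfro (snd A)))"

definition dc_diag :: "nat \<Rightarrow> nat \<Rightarrow> nat \<Rightarrow> (nat \<Rightarrow> dreal) \<Rightarrow> dcmat" where
  "dc_diag m n k d =
    (mat m n (\<lambda>(i,j). if i = j \<and> i < k then complex_of_real (fst (d i)) else 0),
     mat m n (\<lambda>(i,j). if i = j \<and> i < k then complex_of_real (snd (d i)) else 0))"

end

theory Submission
  imports Defs
begin

text \<open>Substitute \<open>X = V Y U\<^sup>*\<close>. Dual unitary factors preserve the dual Frobenius norm, and
  \<open>A X A - A = U (\<Sigma> Y \<Sigma> - \<Sigma>) V\<^sup>*\<close>, so it suffices to treat the diagonal \<open>\<Sigma>\<close>.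
  Whatever \<open>Y\<close> is, the dual part of \<open>\<Sigma> Y \<Sigma> - \<Sigma>\<close> has the entries \<open>-\<mu>\<^sub>i\<close>
  (\<open>r \<le> i < t\<close>) on the diagonal, because the standard part of \<open>\<Sigma>\<close> vanishes there.
  Hence the residual is at least \<open>\<parallel>\<Sigma>\<^sub>2\<^sub>d\<parallel> \<epsilon>\<close>, with equality for \<open>Y = \<Sigma>\<^sup>G\<close>.
  A minimiser must have vanishing standard residual and no further dual residual, which pins
  down the leading \<open>r\<close> diagonal entries of \<open>Y\<close>; among all matrices with these diagonal
  entries the diagonal one, \<open>\<Sigma>\<^sup>G\<close>, has the least dual Frobenius norm.\<close>

section \<open>Conjugate transpose and the Frobenius inner product\<close>

lemma cadj_carrier_mat [simp]: "A \<in> carrier_mat a b \<Longrightarrow> cadj A \<in> carrier_mat b a"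
  by (simp add: cadj_def)

lemma dim_cadj [simp]: "dim_row (cadj A) = dim_col A" "dim_col (cadj A) = dim_row A"
  by (simp_all add: cadj_def)

lemma index_cadj [simp]: "i < dim_col A \<Longrightarrow> j < dim_row A \<Longrightarrow> cadj A $$ (i,j) = cnj (A $$ (j,i))"
  by (simp add: cadj_def)

lemma cadj_cadj [simp]: "cadj (cadj A) = A"
  by (intro eq_matI) auto

lemma cadj_uminus: "cadj (- A) = - cadj A"
  by (intro eq_matI) auto

lemma cadj_mult:
  "A \<in> carrier_mat a b \<Longrightarrow> B \<in> carrier_mat b c \<Longrightarrow> cadj (A * B) = cadj B * cadj A"
  by (intro eq_matI) (auto simp: scalar_prod_def mult.commute)

lemma add_eq_zero_mat_imp_eq_uminus:
  fixes A B :: "'a :: ab_group_add mat"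
  assumes "A \<in> carrier_mat a b" "B \<in> carrier_mat a b" "A + B = 0\<^sub>m a b"
  shows "B = - A"
proof (rule eq_matI)
  fix i j assume "i < dim_row (- A)" "j < dim_col (- A)"
  then have "A $$ (i,j) + B $$ (i,j) = (A + B) $$ (i,j)" using assms(1,2) by simp
  also have "\<dots> = 0" using assms \<open>i < dim_row (- A)\<close> \<open>j < dim_col (- A)\<close> by simp
  finally show "B $$ (i,j) = (- A) $$ (i,j)"
    using assms \<open>i < dim_row (- A)\<close> \<open>j < dim_col (- A)\<close> by (simp add: eq_neg_iff_add_eq_0 add.commute)
qed (use assms in auto)

lemma minus_eq_zero_mat_imp_eq:
  fixes A B :: "'a :: ab_group_add mat"
  assumes "A \<in> carrier_mat a b" "B \<in> carrier_mat a b" "A - B = 0\<^sub>m a b"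
  shows "A = B"
proof (rule eq_matI)
  fix i j assume ij: "i < dim_row B" "j < dim_col B"
  have "A $$ (i,j) - B $$ (i,j) = (A - B) $$ (i,j)" using assms(1,2) ij by simp
  also have "\<dots> = 0" using assms ij by simp
  finally show "A $$ (i,j) = B $$ (i,j)" by simp
qed (use assms in auto)

definition cinner :: "complex mat \<Rightarrow> complex mat \<Rightarrow> complex" where
  "cinner A B = (\<Sum>i<dim_row A. \<Sum>j<dim_col A. cnj (A $$ (i,j)) * B $$ (i,j))"

definition fro_sq :: "complex mat \<Rightarrow> real" where
  "fro_sq M = (\<Sum>i<dim_row M. \<Sum>j<dim_col M. (cmod (M $$ (i,j)))\<^sup>2)"

lemma cfro_eq_sqrt_fro_sq: "cfro M = sqrt (fro_sq M)"
  by (simp add: cfro_def fro_sq_def)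

lemma fro_sq_nonneg: "fro_sq M \<ge> 0"
  by (simp add: fro_sq_def sum_nonneg)

lemma fro_sq_eq_Re_cinner: "fro_sq M = Re (cinner M M)"
  by (simp add: fro_sq_def cinner_def cmod_def power2_eq_square)

lemma fro_sq_eq_0_iff:
  assumes "M \<in> carrier_mat a b"
  shows "fro_sq M = 0 \<longleftrightarrow> M = 0\<^sub>m a b"
proof
  assume "fro_sq M = 0"
  then have "\<forall>i<a. \<forall>j<b. (cmod (M $$ (i,j)))\<^sup>2 = 0"
    using assms by (simp add: fro_sq_def sum_nonneg_eq_0_iff sum_nonneg)
  then show "M = 0\<^sub>m a b" using assms by (intro eq_matI) auto
qed (simp add: fro_sq_def)

lemma ctrace_cadj_mult:
  assumes "A \<in> carrier_mat a b" "B \<in> carrier_mat a b"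
  shows "ctrace (cadj A * B) = cinner A B"
proof -
  have "ctrace (cadj A * B) = (\<Sum>j<b. \<Sum>i<a. cnj (A $$ (i,j)) * B $$ (i,j))"
    using assms by (simp add: ctrace_def scalar_prod_def lessThan_atLeast0)
  then show ?thesis
    using assms by (simp add: cinner_def sum.swap[of _ "{..<b}"])
qed

lemma ctrace_mult_commute:
  assumes "A \<in> carrier_mat a b" "B \<in> carrier_mat b a"
  shows "ctrace (A * B) = ctrace (B * A)"
proof -
  have "ctrace (A * B) = (\<Sum>i<a. \<Sum>k<b. A $$ (i,k) * B $$ (k,i))"
    using assms by (simp add: ctrace_def scalar_prod_def lessThan_atLeast0)
  also have "\<dots> = (\<Sum>k<b. \<Sum>i<a. B $$ (k,i) * A $$ (i,k))"
    by (subst sum.swap) (simp add: mult.commute)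
  also have "\<dots> = ctrace (B * A)"
    using assms by (simp add: ctrace_def scalar_prod_def lessThan_atLeast0)
  finally show ?thesis .
qed

lemma cinner_commute:
  "A \<in> carrier_mat a b \<Longrightarrow> B \<in> carrier_mat a b \<Longrightarrow> cinner B A = cnj (cinner A B)"
  by (simp add: cinner_def mult.commute)

lemma cinner_add_right:
  "A \<in> carrier_mat a b \<Longrightarrow> B \<in> carrier_mat a b \<Longrightarrow> C \<in> carrier_mat a b \<Longrightarrow>
   cinner A (B + C) = cinner A B + cinner A C"
  by (simp add: cinner_def sum.distrib distrib_left)

lemma cinner_uminus_right:
  "A \<in> carrier_mat a b \<Longrightarrow> B \<in> carrier_mat a b \<Longrightarrow> cinner A (- B) = - cinner A B"
  by (simp add: cinner_def sum_negf)

lemma Re_ctrace_cadj_mult_sym: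
  assumes "A \<in> carrier_mat a b" "B \<in> carrier_mat a b"
  shows "Re (ctrace (cadj A * B + cadj B * A)) = 2 * Re (cinner A B)"
proof -
  have "ctrace (cadj A * B + cadj B * A) = ctrace (cadj A * B) + ctrace (cadj B * A)"
    using assms by (simp add: ctrace_def sum.distrib)
  also have "\<dots> = cinner A B + cnj (cinner A B)"
    using assms by (simp add: ctrace_cadj_mult cinner_commute[of A a b B])
  finally show ?thesis by simp
qed

lemma cinner_mult_left:
  assumes "P \<in> carrier_mat c a" "M \<in> carrier_mat a b" "N \<in> carrier_mat c b"
  shows "cinner (P * M) N = cinner M (cadj P * N)"
proof -
  have "cinner (P * M) N = ctrace (cadj M * cadj P * N)"
    using assms by (simp add: ctrace_cadj_mult[symmetric, of _ c b] cadj_mult)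
  also have "\<dots> = ctrace (cadj M * (cadj P * N))"
    using assms by (simp add: assoc_mult_mat[of "cadj M" b a "cadj P" c N b])
  also have "\<dots> = cinner M (cadj P * N)"
    using assms by (intro ctrace_cadj_mult) auto
  finally show ?thesis .
qed

lemma cinner_mult_right:
  assumes "M \<in> carrier_mat a b" "Q \<in> carrier_mat b c" "N \<in> carrier_mat a c"
  shows "cinner (M * Q) N = cinner M (N * cadj Q)"
proof -
  have "cinner (M * Q) N = ctrace (cadj Q * (cadj M * N))"
    using assms by (simp add: ctrace_cadj_mult[symmetric, of _ a c] cadj_mult
        assoc_mult_mat[of "cadj Q" c b "cadj M" a N c])
  also have "\<dots> = ctrace (cadj M * N * cadj Q)"
    using assms by (intro ctrace_mult_commute[of _ c b]) auto
  also have "\<dots> = cinner M (N * cadj Q)"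
    using assms by (simp add: ctrace_cadj_mult[symmetric, of _ a b]
        assoc_mult_mat[of "cadj M" b a N c "cadj Q" b])
  finally show ?thesis .
qed

lemma Re_eq_0_if_cnj_eq_uminus:
  assumes "cnj z = - z" shows "Re z = 0"
proof -
  have "Re (cnj z) = Re (- z)" by (simp only: assms)
  then show ?thesis by simp
qed

lemma Re_cinner_skew_left:
  assumes K: "K \<in> carrier_mat a a" "cadj K = - K" and M: "M \<in> carrier_mat a b"
  shows "Re (cinner M (K * M)) = 0"
proof (rule Re_eq_0_if_cnj_eq_uminus)
  have "cnj (cinner M (K * M)) = cinner (K * M) M"
    using K M by (simp add: cinner_commute[of M a b])
  also have "\<dots> = cinner M (- K * M)"
    using K M by (simp add: cinner_mult_left)
  also have "\<dots> = - cinner M (K * M)"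
    using K M by (simp add: cinner_uminus_right[of M a b])
  finally show "cnj (cinner M (K * M)) = - cinner M (K * M)" .
qed

lemma Re_cinner_skew_right:
  assumes L: "L \<in> carrier_mat b b" "cadj L = - L" and M: "M \<in> carrier_mat a b"
  shows "Re (cinner M (M * L)) = 0"
proof (rule Re_eq_0_if_cnj_eq_uminus)
  have "cnj (cinner M (M * L)) = cinner (M * L) M"
    using L M by (simp add: cinner_commute[of M a b])
  also have "\<dots> = cinner M (M * - L)"
    using L M by (simp add: cinner_mult_right)
  also have "\<dots> = - cinner M (M * L)"
    using L M by (simp add: cinner_uminus_right[of M a b])
  finally show "cnj (cinner M (M * L)) = - cinner M (M * L)" .
qed

section \<open>Dual complex matrices\<close>

lemma dc_fro_pair:
  assumes "Ms \<in> carrier_mat a b" "Md \<in> carrier_mat a b"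
  shows "dc_fro (Ms, Md) =
    (if Ms = 0\<^sub>m a b then (0, cfro Md) else (cfro Ms, Re (cinner Ms Md) / cfro Ms))"
  using assms by (simp add: dc_fro_def Re_ctrace_cadj_mult_sym)

lemma cfro_zero_mat [simp]: "cfro (0\<^sub>m a b) = 0"
  by (simp add: cfro_def)

lemma fst_dc_fro: "M \<in> dcmat_carrier a b \<Longrightarrow> fst (dc_fro M) = cfro (fst M)"
  by (cases M) (simp add: dcmat_carrier_def dc_fro_pair[of _ a b])

lemma dc_fro_eqI:
  assumes W: "Ws \<in> carrier_mat a' b'" "Wd \<in> carrier_mat a' b'"
    and M: "Ms \<in> carrier_mat a b" "Md \<in> carrier_mat a b"
    and fro_std: "fro_sq Ws = fro_sq Ms"
    and inner: "Re (cinner Ws Wd) = Re (cinner Ms Md)"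
    and fro_dual: "Ms = 0\<^sub>m a b \<Longrightarrow> fro_sq Wd = fro_sq Md"
  shows "dc_fro (Ws, Wd) = dc_fro (Ms, Md)"
proof -
  have "Ws = 0\<^sub>m a' b' \<longleftrightarrow> Ms = 0\<^sub>m a b"
    using fro_sq_eq_0_iff[OF W(1)] fro_sq_eq_0_iff[OF M(1)] fro_std by simp
  then show ?thesis
    using assms by (simp add: dc_fro_pair[OF W] dc_fro_pair[OF M] cfro_eq_sqrt_fro_sq)
qed

lemma dc_fro_std_zero: "Md \<in> carrier_mat a b \<Longrightarrow> dc_fro (0\<^sub>m a b, Md) = (0, cfro Md)"
  by (simp add: dc_fro_pair[of _ a b])

lemma std_zero_if_fst_dc_fro_zero:
  assumes "M \<in> dcmat_carrier a b" "fst (dc_fro M) = 0"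
  shows "fst M = 0\<^sub>m a b"
  using assms fro_sq_eq_0_iff[of "fst M" a b]
  by (auto simp: fst_dc_fro[OF assms(1)] cfro_eq_sqrt_fro_sq dcmat_carrier_def)

lemma mem_dcmat_carrier [simp]:
  "(As, Ad) \<in> dcmat_carrier a b \<longleftrightarrow> As \<in> carrier_mat a b \<and> Ad \<in> carrier_mat a b"
  by (simp add: dcmat_carrier_def)

lemma dcmat_carrierE:
  assumes "A \<in> dcmat_carrier a b"
  obtains As Ad where "A = (As, Ad)" "As \<in> carrier_mat a b" "Ad \<in> carrier_mat a b"
  using assms by (cases A) auto

lemma dc_mult_carrier:
  "A \<in> dcmat_carrier a b \<Longrightarrow> B \<in> dcmat_carrier b c \<Longrightarrow> dc_mult A B \<in> dcmat_carrier a c"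
  by (auto simp: dcmat_carrier_def dc_mult_def)

lemma dc_adj_carrier: "A \<in> dcmat_carrier a b \<Longrightarrow> dc_adj A \<in> dcmat_carrier b a"
  by (auto simp: dcmat_carrier_def dc_adj_def)

lemma dc_minus_carrier:
  "A \<in> dcmat_carrier a b \<Longrightarrow> B \<in> dcmat_carrier a b \<Longrightarrow> dc_minus A B \<in> dcmat_carrier a b"
  by (auto simp: dcmat_carrier_def dc_minus_def)

lemma dc_diag_carrier: "dc_diag a b k d \<in> dcmat_carrier a b"
  by (simp add: dc_diag_def)

lemma dc_adj_adj [simp]: "dc_adj (dc_adj A) = A"
  by (simp add: dc_adj_def)

lemma dc_isometry_parts:
  assumes "P \<in> dcmat_carrier c a" "dc_mult (dc_adj P) P = dc_id a"
  shows "cadj (fst P) * fst P = 1\<^sub>m a"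
    and "cadj (cadj (fst P) * snd P) = - (cadj (fst P) * snd P)"
proof -
  obtain Ps Pd where P: "P = (Ps, Pd)" "Ps \<in> carrier_mat c a" "Pd \<in> carrier_mat c a"
    using assms(1) by (rule dcmat_carrierE)
  have "cadj Ps * Ps = 1\<^sub>m a" "cadj Ps * Pd + cadj Pd * Ps = 0\<^sub>m a a"
    using assms(2) P by (simp_all add: dc_mult_def dc_adj_def dc_id_def)
  moreover have "cadj (cadj Ps * Pd) = cadj Pd * Ps"
    using P by (simp add: cadj_mult[of "cadj Ps" a c Pd a])
  moreover have "cadj Ps * Pd \<in> carrier_mat a a" "cadj Pd * Ps \<in> carrier_mat a a"
    using P by (auto intro!: mult_carrier_mat)
  ultimately show "cadj (fst P) * fst P = 1\<^sub>m a"
    and "cadj (cadj (fst P) * snd P) = - (cadj (fst P) * snd P)"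
    using P add_eq_zero_mat_imp_eq_uminus[of "cadj Ps * Pd" a a "cadj Pd * Ps"] by auto
qed

lemma dc_fro_isometry_mult:
  assumes P: "P \<in> dcmat_carrier c a" "dc_mult (dc_adj P) P = dc_id a"
    and M: "M \<in> dcmat_carrier a b"
  shows "dc_fro (dc_mult P M) = dc_fro M"
proof -
  obtain Ps Pd where P': "P = (Ps, Pd)" "Ps \<in> carrier_mat c a" "Pd \<in> carrier_mat c a"
    using P(1) by (rule dcmat_carrierE)
  obtain Ms Md where M': "M = (Ms, Md)" "Ms \<in> carrier_mat a b" "Md \<in> carrier_mat a b"
    using M by (rule dcmat_carrierE)
  define K where "K = cadj Ps * Pd"
  have iso: "cadj Ps * Ps = 1\<^sub>m a" and K: "K \<in> carrier_mat a a" "cadj K = - K"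
    using dc_isometry_parts[OF P] P' by (auto simp: K_def)
  have inner: "cinner (Ps * N') (Ps * N) = cinner N' N"
    if "N' \<in> carrier_mat a b" "N \<in> carrier_mat a b" for N' N
    using P' that iso by (simp add: cinner_mult_left assoc_mult_mat[of "cadj Ps" a c Ps a N b, symmetric])
  \<comment> \<open>\<open>K\<close> is skew-Hermitian by the dual part of \<open>P\<^sup>* P = I\<close>, so this cross term is imaginary.\<close>
  have "cinner (Ps * Ms) (Pd * Ms) = cinner Ms (K * Ms)"
    using P' M' by (simp add: cinner_mult_left K_def assoc_mult_mat[of "cadj Ps" a c Pd a Ms b])
  then have "Re (cinner (Ps * Ms) (Ps * Md + Pd * Ms)) = Re (cinner Ms Md)"
    using P' M' K by (simp add: cinner_add_right[of _ c b] inner Re_cinner_skew_left)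
  moreover have "fro_sq (Ps * Ms) = fro_sq Ms" "fro_sq (Ps * Md) = fro_sq Md"
    using inner M' by (simp_all add: fro_sq_eq_Re_cinner)
  ultimately show ?thesis
    using P' M' by (simp add: dc_mult_def dc_fro_eqI[of _ c b])
qed

lemma dc_fro_mult_adj_isometry:
  assumes Q: "Q \<in> dcmat_carrier c b" "dc_mult (dc_adj Q) Q = dc_id b"
    and M: "M \<in> dcmat_carrier a b"
  shows "dc_fro (dc_mult M (dc_adj Q)) = dc_fro M"
proof -
  obtain Qs Qd where Q': "Q = (Qs, Qd)" "Qs \<in> carrier_mat c b" "Qd \<in> carrier_mat c b"
    using Q(1) by (rule dcmat_carrierE)
  obtain Ms Md where M': "M = (Ms, Md)" "Ms \<in> carrier_mat a b" "Md \<in> carrier_mat a b"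
    using M by (rule dcmat_carrierE)
  define L where "L = cadj Qd * Qs"
  have iso: "cadj Qs * Qs = 1\<^sub>m b" and skew: "cadj (cadj Qs * Qd) = - (cadj Qs * Qd)"
    using dc_isometry_parts[OF Q] Q' by auto
  have "L = cadj (cadj Qs * Qd)"
    using Q' by (simp add: L_def cadj_mult[of "cadj Qs" b c Qd b])
  then have L: "L \<in> carrier_mat b b" "cadj L = - L"
    using Q' skew by (auto simp: L_def cadj_uminus)
  have inner: "cinner (N' * cadj Qs) (N * cadj Qs) = cinner N' N"
    if "N' \<in> carrier_mat a b" "N \<in> carrier_mat a b" for N' N
    using Q' that iso
    by (simp add: cinner_mult_right[of N' a b "cadj Qs" c] assoc_mult_mat[of N a b "cadj Qs" c Qs b])
  have "cinner (Ms * cadj Qs) (Ms * cadj Qd) = cinner Ms (Ms * L)"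
    using Q' M' by (simp add: cinner_mult_right[of Ms a b "cadj Qs" c] L_def
        assoc_mult_mat[of Ms a b "cadj Qd" c Qs b])
  then have "Re (cinner (Ms * cadj Qs) (Ms * cadj Qd + Md * cadj Qs)) = Re (cinner Ms Md)"
    using Q' M' L by (simp add: cinner_add_right[of _ a c] inner Re_cinner_skew_right)
  moreover have "fro_sq (Ms * cadj Qs) = fro_sq Ms" "fro_sq (Md * cadj Qs) = fro_sq Md"
    using inner M' by (simp_all add: fro_sq_eq_Re_cinner)
  ultimately show ?thesis
    using Q' M' by (simp add: dc_mult_def dc_adj_def dc_fro_eqI[of _ a c])
qed

lemma dc_mult_assoc:
  assumes "A \<in> dcmat_carrier a b" "B \<in> dcmat_carrier b c" "C \<in> dcmat_carrier c d"
  shows "dc_mult (dc_mult A B) C = dc_mult A (dc_mult B C)"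
proof -
  obtain As Ad where A: "A = (As, Ad)" "As \<in> carrier_mat a b" "Ad \<in> carrier_mat a b"
    using assms(1) by (rule dcmat_carrierE)
  obtain Bs Bd where B: "B = (Bs, Bd)" "Bs \<in> carrier_mat b c" "Bd \<in> carrier_mat b c"
    using assms(2) by (rule dcmat_carrierE)
  obtain Cs Cd where C: "C = (Cs, Cd)" "Cs \<in> carrier_mat c d" "Cd \<in> carrier_mat c d"
    using assms(3) by (rule dcmat_carrierE)
  have "As * Bs * Cd + (As * Bd + Ad * Bs) * Cs = As * (Bs * Cd + Bd * Cs) + Ad * (Bs * Cs)"
    using A B C by (simp add: add_mult_distrib_mat[of "As * Bd" a c "Ad * Bs" Cs d]
        mult_add_distrib_mat[of As a b "Bs * Cd" d "Bd * Cs"] assoc_add_mat[of "As * (Bs * Cd)" a d])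
  then show ?thesis
    using A B C by (simp add: dc_mult_def)
qed

lemma dc_mult_id_left: "A \<in> dcmat_carrier a b \<Longrightarrow> dc_mult (dc_id a) A = A"
  by (erule dcmat_carrierE) (simp add: dc_mult_def dc_id_def)

lemma dc_mult_id_right: "A \<in> dcmat_carrier a b \<Longrightarrow> dc_mult A (dc_id b) = A"
  by (erule dcmat_carrierE) (simp add: dc_mult_def dc_id_def)

lemma dc_mult_zero_right: "A \<in> dcmat_carrier a b \<Longrightarrow> dc_mult A (0\<^sub>m b c, 0\<^sub>m b c) = (0\<^sub>m a c, 0\<^sub>m a c)"
  by (erule dcmat_carrierE) (simp add: dc_mult_def)

lemma dc_mult_zero_left: "B \<in> dcmat_carrier b c \<Longrightarrow> dc_mult (0\<^sub>m a b, 0\<^sub>m a b) B = (0\<^sub>m a c, 0\<^sub>m a c)"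
  by (erule dcmat_carrierE) (simp add: dc_mult_def)

lemma dc_mult_minus_distrib_left:
  assumes "P \<in> dcmat_carrier a b" "B \<in> dcmat_carrier b c" "C \<in> dcmat_carrier b c"
  shows "dc_mult P (dc_minus B C) = dc_minus (dc_mult P B) (dc_mult P C)"
proof -
  obtain Ps Pd where P: "P = (Ps, Pd)" "Ps \<in> carrier_mat a b" "Pd \<in> carrier_mat a b"
    using assms(1) by (rule dcmat_carrierE)
  obtain Bs Bd where B: "B = (Bs, Bd)" "Bs \<in> carrier_mat b c" "Bd \<in> carrier_mat b c"
    using assms(2) by (rule dcmat_carrierE)
  obtain Cs Cd where C: "C = (Cs, Cd)" "Cs \<in> carrier_mat b c" "Cd \<in> carrier_mat b c"
    using assms(3) by (rule dcmat_carrierE)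
  show ?thesis
    using P B C by (simp add: dc_mult_def dc_minus_def mult_minus_distrib_mat[of _ a b])
      (intro eq_matI; simp add: mult_minus_distrib_mat[of _ a b])
qed

lemma dc_mult_minus_distrib_right:
  assumes "B \<in> dcmat_carrier a b" "C \<in> dcmat_carrier a b" "Q \<in> dcmat_carrier b c"
  shows "dc_mult (dc_minus B C) Q = dc_minus (dc_mult B Q) (dc_mult C Q)"
proof -
  obtain Qs Qd where Q: "Q = (Qs, Qd)" "Qs \<in> carrier_mat b c" "Qd \<in> carrier_mat b c"
    using assms(3) by (rule dcmat_carrierE)
  obtain Bs Bd where B: "B = (Bs, Bd)" "Bs \<in> carrier_mat a b" "Bd \<in> carrier_mat a b"
    using assms(1) by (rule dcmat_carrierE)
  obtain Cs Cd where C: "C = (Cs, Cd)" "Cs \<in> carrier_mat a b" "Cd \<in> carrier_mat a b"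
    using assms(2) by (rule dcmat_carrierE)
  show ?thesis
    using Q B C by (simp add: dc_mult_def dc_minus_def minus_mult_distrib_mat[of _ a b])
      (intro eq_matI; simp add: minus_mult_distrib_mat[of _ a b])
qed

lemma dc_unitary_adj: "dc_unitary n V \<Longrightarrow> dc_unitary n (dc_adj V)"
  by (auto simp: dc_unitary_def dc_adj_carrier)

lemma dc_fro_unitary_conj:
  assumes "dc_unitary a P" "dc_unitary b Q" "M \<in> dcmat_carrier a b"
  shows "dc_fro (dc_mult (dc_mult P M) (dc_adj Q)) = dc_fro M"
proof -
  have "P \<in> dcmat_carrier a a" "Q \<in> dcmat_carrier b b"
    using assms by (simp_all add: dc_unitary_def)
  then show ?thesis
    using assms by (simp add: dc_unitary_def dc_mult_carrier dc_fro_mult_adj_isometry[of Q b b _ a]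
        dc_fro_isometry_mult[of P a a])
qed

abbreviation dc_residual :: "dcmat \<Rightarrow> dcmat \<Rightarrow> dcmat" where
  "dc_residual A X \<equiv> dc_minus (dc_mult (dc_mult A X) A) A"

lemma dc_residual_conj:
  assumes U: "U \<in> dcmat_carrier m m" and V: "V \<in> dcmat_carrier n n"
    and S: "S \<in> dcmat_carrier m n" and X: "X \<in> dcmat_carrier n m"
  shows "dc_residual (dc_mult (dc_mult U S) (dc_adj V)) X
       = dc_mult (dc_mult U (dc_residual S (dc_mult (dc_mult (dc_adj V) X) U))) (dc_adj V)"
proof -
  let ?W = "dc_adj V" and ?Y = "dc_mult (dc_mult (dc_adj V) X) U"
  have W: "?W \<in> dcmat_carrier n n" using V by (rule dc_adj_carrier)
  have US: "dc_mult U S \<in> dcmat_carrier m n" and WX: "dc_mult ?W X \<in> dcmat_carrier n m"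
    and Y: "?Y \<in> dcmat_carrier n m"
    using U S W X by (auto intro: dc_mult_carrier)
  have YS: "dc_mult ?Y S \<in> dcmat_carrier n n" and SYS: "dc_mult (dc_mult S ?Y) S \<in> dcmat_carrier m n"
    using S Y by (auto intro: dc_mult_carrier)
  have "dc_mult (dc_mult (dc_mult (dc_mult U S) ?W) X) (dc_mult (dc_mult U S) ?W)
      = dc_mult (dc_mult U S) (dc_mult (dc_mult ?W X) (dc_mult (dc_mult U S) ?W))"
    using dc_mult_assoc[OF US W X] dc_mult_assoc[OF US WX dc_mult_carrier[OF US W]] by simp
  also have "dc_mult (dc_mult ?W X) (dc_mult (dc_mult U S) ?W) = dc_mult (dc_mult ?Y S) ?W"
    using dc_mult_assoc[OF WX US W] dc_mult_assoc[OF WX U S] by simp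
  also have "dc_mult (dc_mult U S) (dc_mult (dc_mult ?Y S) ?W)
      = dc_mult (dc_mult U (dc_mult (dc_mult S ?Y) S)) ?W"
    using dc_mult_assoc[OF US YS W] dc_mult_assoc[OF U S YS] dc_mult_assoc[OF S Y S] by simp
  finally show ?thesis
    by (simp add: dc_mult_minus_distrib_right[OF dc_mult_carrier[OF U SYS] US W]
        dc_mult_minus_distrib_left[OF U SYS S])
qed

lemma dc_minus_eq_zero_imp_eq:
  assumes "A \<in> dcmat_carrier a b" "B \<in> dcmat_carrier a b" "dc_minus A B = (0\<^sub>m a b, 0\<^sub>m a b)"
  shows "A = B"
  using assms minus_eq_zero_mat_imp_eq[of "fst A" a b "fst B"] minus_eq_zero_mat_imp_eq[of "snd A" a b "snd B"]
  by (simp add: dc_minus_def dcmat_carrier_def prod_eq_iff)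

lemma dc_unitary_conj_carrier:
  assumes "dc_unitary a P" "dc_unitary b Q" "M \<in> dcmat_carrier a b"
  shows "dc_mult (dc_mult P M) (dc_adj Q) \<in> dcmat_carrier a b"
  using assms by (auto simp: dc_unitary_def intro: dc_mult_carrier dc_adj_carrier)

lemma dc_unitary_conj_cancel:
  assumes P: "dc_unitary a P" and Q: "dc_unitary b Q" and M: "M \<in> dcmat_carrier a b"
  shows "dc_mult (dc_mult (dc_adj P) (dc_mult (dc_mult P M) (dc_adj Q))) Q = M"
proof -
  have Pc: "P \<in> dcmat_carrier a a" "dc_adj P \<in> dcmat_carrier a a"
    and Qc: "Q \<in> dcmat_carrier b b" "dc_adj Q \<in> dcmat_carrier b b"
    using P Q by (simp_all add: dc_unitary_def dc_adj_carrier)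
  have PM: "dc_mult P M \<in> dcmat_carrier a b"
    using Pc(1) M by (rule dc_mult_carrier)
  have "dc_mult (dc_mult (dc_adj P) (dc_mult N (dc_adj Q))) Q = dc_mult (dc_adj P) N"
    if "N \<in> dcmat_carrier a b" for N
    using Pc Qc that Q dc_mult_carrier[OF that Qc(2)]
    by (simp add: dc_mult_assoc[of _ a a _ b _ b] dc_mult_assoc[of N a b _ b _ b]
        dc_unitary_def dc_mult_id_right)
  then show ?thesis
    using Pc PM M P by (simp add: dc_mult_assoc[of _ a a _ a _ b, symmetric] dc_unitary_def dc_mult_id_left)
qed

lemma dc_fro_residual_unitary_conj:
  assumes U: "dc_unitary m U" and V: "dc_unitary n V"
    and S: "S \<in> dcmat_carrier m n" and X: "X \<in> dcmat_carrier n m"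
  shows "dc_fro (dc_residual (dc_mult (dc_mult U S) (dc_adj V)) X)
       = dc_fro (dc_residual S (dc_mult (dc_mult (dc_adj V) X) U))"
proof -
  have "U \<in> dcmat_carrier m m" "V \<in> dcmat_carrier n n"
    using U V by (simp_all add: dc_unitary_def)
  moreover from this have "dc_residual S (dc_mult (dc_mult (dc_adj V) X) U) \<in> dcmat_carrier m n"
    using S X by (intro dc_minus_carrier dc_mult_carrier dc_adj_carrier)
  ultimately show ?thesis
    using U V S X by (simp add: dc_residual_conj dc_fro_unitary_conj)
qed

lemma dc_residual_unitary_conj_eq_zero:
  assumes U: "dc_unitary m U" and V: "dc_unitary n V"
    and S: "S \<in> dcmat_carrier m n" and G: "G \<in> dcmat_carrier n m"
    and zero: "dc_residual S G = (0\<^sub>m m n, 0\<^sub>m m n)"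
  defines "A \<equiv> dc_mult (dc_mult U S) (dc_adj V)" and "X \<equiv> dc_mult (dc_mult V G) (dc_adj U)"
  shows "dc_mult (dc_mult A X) A = A"
proof -
  have UV: "U \<in> dcmat_carrier m m" "V \<in> dcmat_carrier n n"
    using U V by (simp_all add: dc_unitary_def)
  have A: "A \<in> dcmat_carrier m n" and X: "X \<in> dcmat_carrier n m"
    unfolding A_def X_def using U V S G by (simp_all add: dc_unitary_conj_carrier)
  have "dc_residual A X = dc_mult (dc_mult U (dc_residual S (dc_mult (dc_mult (dc_adj V) X) U))) (dc_adj V)"
    unfolding A_def by (rule dc_residual_conj[OF UV S X])
  also have "\<dots> = dc_mult (dc_mult U (0\<^sub>m m n, 0\<^sub>m m n)) (dc_adj V)"
    unfolding X_def by (simp only: dc_unitary_conj_cancel[OF V U G] zero)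
  also have "\<dots> = (0\<^sub>m m n, 0\<^sub>m m n)"
    by (simp add: dc_mult_zero_right[OF UV(1)] dc_mult_zero_left[OF dc_adj_carrier[OF UV(2)]])
  finally show ?thesis
    by (rule dc_minus_eq_zero_imp_eq[OF dc_mult_carrier[OF dc_mult_carrier[OF A X] A] A])
qed

section \<open>Diagonal matrices\<close>

definition cdiag :: "nat \<Rightarrow> nat \<Rightarrow> nat \<Rightarrow> (nat \<Rightarrow> complex) \<Rightarrow> complex mat" where
  "cdiag a b k f = mat a b (\<lambda>(i,j). if i = j \<and> i < k then f i else 0)"

lemma cdiag_carrier [simp]: "cdiag a b k f \<in> carrier_mat a b"
  by (simp add: cdiag_def)

lemma dim_cdiag [simp]: "dim_row (cdiag a b k f) = a" "dim_col (cdiag a b k f) = b"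
  by (simp_all add: cdiag_def)

lemma index_cdiag [simp]: "i < a \<Longrightarrow> j < b \<Longrightarrow> cdiag a b k f $$ (i,j) = (if i = j \<and> i < k then f i else 0)"
  by (simp add: cdiag_def)

lemma dc_diag_eq_cdiag:
  "dc_diag a b k d = (cdiag a b k (\<lambda>i. of_real (fst (d i))), cdiag a b k (\<lambda>i. of_real (snd (d i))))"
  by (simp add: dc_diag_def cdiag_def)

lemma index_cdiag_mult:
  assumes "k \<le> a" "k \<le> b" "B \<in> carrier_mat b c" "i < a" "j < c"
  shows "(cdiag a b k f * B) $$ (i,j) = (if i < k then f i * B $$ (i,j) else 0)"
proof -
  have "(cdiag a b k f * B) $$ (i,j) = (\<Sum>l<b. (if i = l \<and> i < k then f i else 0) * B $$ (l,j))"
    using assms by (simp add: cdiag_def scalar_prod_def lessThan_atLeast0)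
  also have "\<dots> = (\<Sum>l<b. if l = i then (if i < k then f i * B $$ (i,j) else 0) else 0)"
    by (rule sum.cong) auto
  finally show ?thesis
    using assms by simp
qed

lemma index_mult_cdiag:
  assumes "k \<le> a" "k \<le> b" "B \<in> carrier_mat c a" "i < c" "j < b"
  shows "(B * cdiag a b k f) $$ (i,j) = (if j < k then B $$ (i,j) * f j else 0)"
proof -
  have "(B * cdiag a b k f) $$ (i,j) = (\<Sum>l<a. B $$ (i,l) * (if l = j \<and> l < k then f l else 0))"
    using assms by (simp add: cdiag_def scalar_prod_def lessThan_atLeast0)
  also have "\<dots> = (\<Sum>l<a. if l = j then (if j < k then B $$ (i,j) * f j else 0) else 0)"
    by (rule sum.cong) auto
  finally show ?thesis
    using assms by simp
qed

lemma cinner_cdiag: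
  assumes "k \<le> a" "k \<le> b" "N \<in> carrier_mat a b"
  shows "cinner (cdiag a b k f) N = (\<Sum>i<k. cnj (f i) * N $$ (i,i))"
proof -
  have "cinner (cdiag a b k f) N
      = (\<Sum>i<a. \<Sum>j<b. if j = i then (if i < k then cnj (f i) * N $$ (i,i) else 0) else 0)"
    unfolding cinner_def by (intro sum.cong refl) auto
  also have "\<dots> = (\<Sum>i<a. if i < k then cnj (f i) * N $$ (i,i) else 0)"
    using assms by (intro sum.cong refl) auto
  also have "\<dots> = (\<Sum>i\<in>{i\<in>{..<a}. i < k}. cnj (f i) * N $$ (i,i))"
    by (rule sum.inter_filter[symmetric]) simp
  also have "{i\<in>{..<a}. i < k} = {..<k}"
    using assms by auto
  finally show ?thesis .
qed

lemma fro_sq_cdiag: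
  "k \<le> a \<Longrightarrow> k \<le> b \<Longrightarrow> fro_sq (cdiag a b k f) = (\<Sum>i<k. (cmod (f i))\<^sup>2)"
  by (simp add: fro_sq_eq_Re_cinner cinner_cdiag cmod_def power2_eq_square)

lemma fro_sq_split_diag:
  assumes M: "M \<in> carrier_mat a b" and I: "I \<subseteq> {..<min a b}"
  shows "fro_sq M = (\<Sum>i\<in>I. (cmod (M $$ (i,i)))\<^sup>2)
    + (\<Sum>i<a. \<Sum>j<b. if i = j \<and> i \<in> I then 0 else (cmod (M $$ (i,j)))\<^sup>2)"
proof -
  have "fro_sq M = (\<Sum>i<a. \<Sum>j<b. (if i = j \<and> i \<in> I then (cmod (M $$ (i,j)))\<^sup>2 else 0)
      + (if i = j \<and> i \<in> I then 0 else (cmod (M $$ (i,j)))\<^sup>2))"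
    using M unfolding fro_sq_def by (intro sum.cong refl) auto
  also have "\<dots> = (\<Sum>i<a. \<Sum>j<b. if i = j \<and> i \<in> I then (cmod (M $$ (i,j)))\<^sup>2 else 0)
      + (\<Sum>i<a. \<Sum>j<b. if i = j \<and> i \<in> I then 0 else (cmod (M $$ (i,j)))\<^sup>2)"
    by (simp only: sum.distrib)
  also have "(\<Sum>i<a. \<Sum>j<b. if i = j \<and> i \<in> I then (cmod (M $$ (i,j)))\<^sup>2 else 0)
      = (\<Sum>i<a. if i \<in> I then (cmod (M $$ (i,i)))\<^sup>2 else 0)"
  proof (intro sum.cong refl)
    fix i assume "i \<in> {..<a}"
    show "(\<Sum>j<b. if i = j \<and> i \<in> I then (cmod (M $$ (i,j)))\<^sup>2 else 0)
        = (if i \<in> I then (cmod (M $$ (i,i)))\<^sup>2 else 0)"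
      using I by (cases "i \<in> I") auto
  qed
  also have "\<dots> = (\<Sum>i\<in>{i\<in>{..<a}. i \<in> I}. (cmod (M $$ (i,i)))\<^sup>2)"
    by (rule sum.inter_filter[symmetric]) simp
  also have "{i\<in>{..<a}. i \<in> I} = I"
    using I by auto
  finally show ?thesis .
qed

lemma sum_diag_le_fro_sq:
  assumes "M \<in> carrier_mat a b" "I \<subseteq> {..<min a b}"
  shows "(\<Sum>i\<in>I. (cmod (M $$ (i,i)))\<^sup>2) \<le> fro_sq M"
  using fro_sq_split_diag[OF assms] by (simp add: sum_nonneg)

lemma fro_sq_eq_sum_diag_iff:
  assumes "M \<in> carrier_mat a b" "I \<subseteq> {..<min a b}"
  shows "fro_sq M = (\<Sum>i\<in>I. (cmod (M $$ (i,i)))\<^sup>2)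
    \<longleftrightarrow> (\<forall>i<a. \<forall>j<b. \<not> (i = j \<and> i \<in> I) \<longrightarrow> M $$ (i,j) = 0)"
proof -
  let ?off = "\<lambda>i j. if i = j \<and> i \<in> I then 0 else (cmod (M $$ (i,j)))\<^sup>2"
  have "(\<Sum>i<a. \<Sum>j<b. ?off i j) = 0 \<longleftrightarrow> (\<forall>i\<in>{..<a}. (\<Sum>j<b. ?off i j) = 0)"
    by (rule sum_nonneg_eq_0_iff) (auto intro: sum_nonneg)
  also have "\<dots> \<longleftrightarrow> (\<forall>i\<in>{..<a}. \<forall>j\<in>{..<b}. ?off i j = 0)"
    by (intro ball_cong refl sum_nonneg_eq_0_iff) auto
  also have "\<dots> \<longleftrightarrow> (\<forall>i<a. \<forall>j<b. \<not> (i = j \<and> i \<in> I) \<longrightarrow> M $$ (i,j) = 0)"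
    by auto
  finally show ?thesis
    unfolding fro_sq_split_diag[OF assms] by (subst add_cancel_left_right)
qed

lemma index_dc_residual_cdiag:
  fixes s d :: "nat \<Rightarrow> complex"
  assumes t: "t \<le> m" "t \<le> n" and Y: "Ys \<in> carrier_mat n m" "Yd \<in> carrier_mat n m"
    and ij: "i < m" "j < n"
  defines "E \<equiv> dc_residual (cdiag m n t s, cdiag m n t d) (Ys, Yd)"
  shows "fst E $$ (i,j) = (if i < t \<and> j < t then s i * Ys $$ (i,j) * s j else 0)
      - (if i = j \<and> i < t then s i else 0)"
    and "snd E $$ (i,j) = (if i < t \<and> j < t then
        s i * Ys $$ (i,j) * d j + s i * Yd $$ (i,j) * s j + d i * Ys $$ (i,j) * s j else 0)
      - (if i = j \<and> i < t then d i else 0)"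
proof -
  let ?S = "cdiag m n t s" and ?D = "cdiag m n t d"
  have left: "(cdiag m n t f * B) $$ (i,j) = (if i < t then f i * B $$ (i,j) else 0)"
    if "B \<in> carrier_mat n m" "j < t" for f B
    using index_cdiag_mult[OF t that(1) ij(1)] that(2) t by simp
  have right: "(B * cdiag m n t f) $$ (i,j) = (if j < t then B $$ (i,j) * f j else 0)"
    if "B \<in> carrier_mat m m" for f B
    using index_mult_cdiag[OF t that ij] .
  have c: "?S * Ys \<in> carrier_mat m m" "?S * Yd \<in> carrier_mat m m" "?D * Ys \<in> carrier_mat m m"
    using Y by (auto intro: mult_carrier_mat)
  have "fst E $$ (i,j) = (?S * Ys * ?S) $$ (i,j) - ?S $$ (i,j)"
    using c ij by (simp add: E_def dc_mult_def dc_minus_def del: index_mult_mat(1))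
  then show "fst E $$ (i,j) = (if i < t \<and> j < t then s i * Ys $$ (i,j) * s j else 0)
      - (if i = j \<and> i < t then s i else 0)"
    using c ij Y by (cases "j < t") (simp_all add: right left del: index_mult_mat(1))
  have "snd E $$ (i,j) = (?S * Ys * ?D) $$ (i,j) + ((?S * Yd) * ?S) $$ (i,j) + ((?D * Ys) * ?S) $$ (i,j)
      - ?D $$ (i,j)"
    using c ij by (simp add: E_def dc_mult_def dc_minus_def
        add_mult_distrib_mat[OF c(2,3) cdiag_carrier] del: index_mult_mat(1))
  then show "snd E $$ (i,j) = (if i < t \<and> j < t then
        s i * Ys $$ (i,j) * d j + s i * Yd $$ (i,j) * s j + d i * Ys $$ (i,j) * s j else 0)
      - (if i = j \<and> i < t then d i else 0)"
    using c ij Y by (cases "j < t") (simp_all add: right left del: index_mult_mat(1))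
qed

lemma dc_fro_cdiag_le:
  assumes k: "k \<le> a" "k \<le> b" and Y: "Ys \<in> carrier_mat a b" "Yd \<in> carrier_mat a b"
    and diag: "\<And>i. i < k \<Longrightarrow> Ys $$ (i,i) = g i \<and> Yd $$ (i,i) = h i"
  shows "dr_le (dc_fro (cdiag a b k g, cdiag a b k h)) (dc_fro (Ys, Yd))"
proof -
  let ?G = "cdiag a b k g" and ?H = "cdiag a b k h"
  have I: "{..<k} \<subseteq> {..<min a b}" using k by auto
  have fro_G: "fro_sq ?G = (\<Sum>i<k. (cmod (Ys $$ (i,i)))\<^sup>2)"
    using k diag by (simp add: fro_sq_cdiag)
  have "fro_sq ?H = (\<Sum>i<k. (cmod (Yd $$ (i,i)))\<^sup>2)"
    using k diag by (simp add: fro_sq_cdiag)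
  then have fro_H: "cfro ?H \<le> cfro Yd"
    using sum_diag_le_fro_sq[OF Y(2) I] by (simp add: cfro_eq_sqrt_fro_sq)
  show ?thesis
  proof (cases "Ys = ?G")
    case False
    have "fro_sq Ys \<noteq> (\<Sum>i<k. (cmod (Ys $$ (i,i)))\<^sup>2)"
    proof
      assume "fro_sq Ys = (\<Sum>i<k. (cmod (Ys $$ (i,i)))\<^sup>2)"
      then have "Ys $$ (i,j) = ?G $$ (i,j)" if "i < a" "j < b" for i j
        using fro_sq_eq_sum_diag_iff[OF Y(1) I] diag that by auto
      then show False
        using False Y(1) by (auto intro!: eq_matI)
    qed
    then have "cfro ?G < cfro Ys"
      using sum_diag_le_fro_sq[OF Y(1) I] fro_G by (simp add: cfro_eq_sqrt_fro_sq)
    then show ?thesis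
      using fst_dc_fro[of "(?G, ?H)" a b] fst_dc_fro[of "(Ys, Yd)" a b] Y by (simp add: dr_le_def)
  next
    case True
    have "cinner ?G Yd = cinner ?G ?H"
      using k Y diag by (simp add: cinner_cdiag)
    then show ?thesis
      using True Y fro_H by (simp add: dc_fro_pair[of _ a b] dr_le_def)
  qed
qed

section \<open>The diagonal case\<close>

locale dual_singular_values =
  fixes m n r t :: nat and mu :: "nat \<Rightarrow> dreal"
  assumes r_le_t: "r \<le> t" and t_le: "t \<le> min m n"
    and appreciable: "\<And>i. i < r \<Longrightarrow> fst (mu i) \<noteq> 0"
    and infinitesimal: "\<And>i. r \<le> i \<Longrightarrow> i < t \<Longrightarrow> fst (mu i) = 0"
begin

abbreviation sigma :: dcmat where
  "sigma \<equiv> dc_diag m n t mu"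

abbreviation sigma_ginv :: dcmat where
  "sigma_ginv \<equiv> dc_diag n m r (\<lambda>i. dr_inv (mu i))"

abbreviation opt_residual :: dreal where
  "opt_residual \<equiv> (0, sqrt (\<Sum>i\<in>{r..<t}. (snd (mu i))\<^sup>2))"

abbreviation std :: "nat \<Rightarrow> complex" where
  "std i \<equiv> complex_of_real (fst (mu i))"

abbreviation dual :: "nat \<Rightarrow> complex" where
  "dual i \<equiv> complex_of_real (snd (mu i))"

lemma std_nonzero: "i < r \<Longrightarrow> std i \<noteq> 0"
  using appreciable[of i] by simp

lemma std_zero: "r \<le> i \<Longrightarrow> i < t \<Longrightarrow> std i = 0"
  using infinitesimal[of i] by simp

lemma sigma_ginv_eq:
  "sigma_ginv = (cdiag n m r (\<lambda>i. 1 / std i), cdiag n m r (\<lambda>i. - dual i / (std i)\<^sup>2))"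
  by (simp add: dc_diag_eq_cdiag dr_inv_def)

lemma index_residual:
  assumes Y: "Y \<in> dcmat_carrier n m" and ij: "i < m" "j < n"
  shows "fst (dc_residual sigma Y) $$ (i,j) = (if i < t \<and> j < t then std i * fst Y $$ (i,j) * std j else 0)
      - (if i = j \<and> i < t then std i else 0)"
    and "snd (dc_residual sigma Y) $$ (i,j) = (if i < t \<and> j < t then
        std i * fst Y $$ (i,j) * dual j + std i * snd Y $$ (i,j) * std j + dual i * fst Y $$ (i,j) * std j
        else 0)
      - (if i = j \<and> i < t then dual i else 0)"
proof -
  obtain Ys Yd where "Y = (Ys, Yd)" "Ys \<in> carrier_mat n m" "Yd \<in> carrier_mat n m"
    using Y by (rule dcmat_carrierE)
  then show "fst (dc_residual sigma Y) $$ (i,j) = (if i < t \<and> j < t then std i * fst Y $$ (i,j) * std j else 0)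
      - (if i = j \<and> i < t then std i else 0)"
    and "snd (dc_residual sigma Y) $$ (i,j) = (if i < t \<and> j < t then
        std i * fst Y $$ (i,j) * dual j + std i * snd Y $$ (i,j) * std j + dual i * fst Y $$ (i,j) * std j
        else 0)
      - (if i = j \<and> i < t then dual i else 0)"
    using index_dc_residual_cdiag[of t m n Ys Yd i j std dual] t_le ij
    by (simp_all add: dc_diag_eq_cdiag)
qed

lemma residual_carrier: "Y \<in> dcmat_carrier n m \<Longrightarrow> dc_residual sigma Y \<in> dcmat_carrier m n"
  by (rule dc_minus_carrier[OF dc_mult_carrier[OF dc_mult_carrier] dc_diag_carrier])
    (rule dc_diag_carrier, assumption, rule dc_diag_carrier)

lemma residual_sigma_ginv:
  "dc_residual sigma sigma_ginv = (0\<^sub>m m n, cdiag m n t (\<lambda>i. if r \<le> i then - dual i else 0))"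
proof -
  have G: "sigma_ginv \<in> dcmat_carrier n m"
    by (rule dc_diag_carrier)
  have E: "dc_residual sigma sigma_ginv \<in> dcmat_carrier m n"
    by (rule residual_carrier[OF G])
  have "fst (dc_residual sigma sigma_ginv) $$ (i,j) = 0"
    and "snd (dc_residual sigma sigma_ginv) $$ (i,j) = (if i = j \<and> r \<le> i \<and> i < t then - dual i else 0)"
    if ij: "i < m" "j < n" for i j
  proof -
    let ?g = "fst sigma_ginv $$ (i,j)" and ?h = "snd sigma_ginv $$ (i,j)"
    have std_g: "std i * ?g * std j = (if i = j then std i else 0)"
      and dual_gh: "std i * ?g * dual j + std i * ?h * std j + dual i * ?g * std j
        = (if i = j \<and> i < r then dual i else 0)"
      if "i < t" "j < t"
    proof -
      have "i < n" "j < m" using that t_le by auto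
      then have "?g = (if i = j \<and> i < r then 1 / std i else 0)"
        and "?h = (if i = j \<and> i < r then - dual i / (std i)\<^sup>2 else 0)"
        by (simp_all add: sigma_ginv_eq)
      then show "std i * ?g * std j = (if i = j then std i else 0)"
        and "std i * ?g * dual j + std i * ?h * std j + dual i * ?g * std j
          = (if i = j \<and> i < r then dual i else 0)"
        using std_nonzero[of i] std_zero[of i] that
        by (auto simp: field_simps power2_eq_square)
    qed
    show "fst (dc_residual sigma sigma_ginv) $$ (i,j) = 0"
      using index_residual(1)[OF G ij] std_g by auto
    show "snd (dc_residual sigma sigma_ginv) $$ (i,j)
        = (if i = j \<and> r \<le> i \<and> i < t then - dual i else 0)"
      using index_residual(2)[OF G ij] dual_gh by auto
  qed
  then show ?thesis
    using E by (auto simp: dcmat_carrier_def prod_eq_iff intro!: eq_matI)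
qed

lemma sum_sq_dual_eq: "(\<Sum>i<t. (cmod (if r \<le> i then - dual i else 0))\<^sup>2) = (\<Sum>i\<in>{r..<t}. (snd (mu i))\<^sup>2)"
proof -
  have "(\<Sum>i<t. (cmod (if r \<le> i then - dual i else 0))\<^sup>2) = (\<Sum>i<t. if r \<le> i then (snd (mu i))\<^sup>2 else 0)"
    by (intro sum.cong refl) auto
  also have "\<dots> = (\<Sum>i\<in>{i\<in>{..<t}. r \<le> i}. (snd (mu i))\<^sup>2)"
    by (rule sum.inter_filter[symmetric]) simp
  also have "{i\<in>{..<t}. r \<le> i} = {r..<t}"
    by auto
  finally show ?thesis .
qed

lemma dc_fro_residual_sigma_ginv: "dc_fro (dc_residual sigma sigma_ginv) = opt_residual"
  using t_le sum_sq_dual_eq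
  by (simp add: residual_sigma_ginv dc_fro_std_zero cfro_eq_sqrt_fro_sq fro_sq_cdiag)

lemma residual_sigma_ginv_zero:
  assumes "r = t"
  shows "dc_residual sigma sigma_ginv = (0\<^sub>m m n, 0\<^sub>m m n)"
proof -
  have "cdiag m n t (\<lambda>i. if r \<le> i then - dual i else 0) = 0\<^sub>m m n"
    using assms by (auto intro!: eq_matI)
  then show ?thesis
    by (simp add: residual_sigma_ginv)
qed

lemma snd_residual_diag:
  assumes "Y \<in> dcmat_carrier n m" "r \<le> i" "i < t"
  shows "snd (dc_residual sigma Y) $$ (i,i) = - dual i"
  using assms t_le std_zero[of i] index_residual(2)[of Y i i] by simp

lemma opt_residual_le:
  assumes Y: "Y \<in> dcmat_carrier n m"
  shows "dr_le opt_residual (dc_fro (dc_residual sigma Y))"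
proof -
  define E where "E = dc_residual sigma Y"
  have E: "E \<in> dcmat_carrier m n"
    unfolding E_def using Y by (rule residual_carrier)
  show ?thesis
  proof (cases "fst (dc_fro E) = 0")
    case True
    with E have "fst E = 0\<^sub>m m n"
      by (rule std_zero_if_fst_dc_fro_zero)
    then have "dc_fro E = (0, cfro (snd E))"
      using E dc_fro_std_zero[of "snd E" m n] by (cases E) simp
    moreover have "(\<Sum>i\<in>{r..<t}. (cmod (snd E $$ (i,i)))\<^sup>2) \<le> fro_sq (snd E)"
      using E t_le by (intro sum_diag_le_fro_sq[of _ m n]) (auto simp: dcmat_carrier_def)
    ultimately show ?thesis
      using Y snd_residual_diag by (simp add: E_def dr_le_def cfro_eq_sqrt_fro_sq)
  next
    case False
    then show ?thesis
      using fst_dc_fro[OF E] fro_sq_nonneg[of "fst E"] by (simp add: E_def dr_le_def cfro_eq_sqrt_fro_sq)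
  qed
qed

lemma optimal_residual_diag:
  assumes Y: "Y \<in> dcmat_carrier n m" and opt: "dc_fro (dc_residual sigma Y) = opt_residual"
    and i: "i < r"
  shows "fst Y $$ (i,i) = 1 / std i" and "snd Y $$ (i,i) = - dual i / (std i)\<^sup>2"
proof -
  define E where "E = dc_residual sigma Y"
  have E: "E \<in> dcmat_carrier m n"
    unfolding E_def using Y by (rule residual_carrier)
  have i': "i < t" "i < m" "i < n" using i r_le_t t_le by auto
  have "fst E = 0\<^sub>m m n"
    using E opt by (simp add: E_def std_zero_if_fst_dc_fro_zero)
  then have "std i * fst Y $$ (i,i) * std i - std i = 0"
    using index_residual(1)[OF Y i'(2,3)] i' by (simp add: E_def)
  then show std: "fst Y $$ (i,i) = 1 / std i"
    using std_nonzero[OF i] by (simp add: field_simps)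
  have "dc_fro E = (0, cfro (snd E))"
    using E \<open>fst E = 0\<^sub>m m n\<close> dc_fro_std_zero[of "snd E" m n] by (cases E) simp
  then have "fro_sq (snd E) = (\<Sum>k\<in>{r..<t}. (cmod (snd E $$ (k,k)))\<^sup>2)"
    using opt Y snd_residual_diag fro_sq_nonneg[of "snd E"]
    by (simp add: E_def cfro_eq_sqrt_fro_sq sum_nonneg)
  then have "snd E $$ (i,i) = 0"
    using E t_le i' i by (subst (asm) fro_sq_eq_sum_diag_iff[of _ m n]) (auto simp: dcmat_carrier_def)
  then have "(std i)\<^sup>2 * snd Y $$ (i,i) + dual i = 0"
    using index_residual(2)[OF Y i'(2,3)] i' std std_nonzero[OF i]
    by (simp add: E_def field_simps power2_eq_square)
  then have "snd Y $$ (i,i) * (std i)\<^sup>2 = - dual i"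
    by (metis add_eq_0_iff add.commute mult.commute)
  moreover have "(std i)\<^sup>2 \<noteq> 0"
    using std_nonzero[OF i] by simp
  ultimately show "snd Y $$ (i,i) = - dual i / (std i)\<^sup>2"
    by (metis nonzero_mult_div_cancel_right)
qed

lemma sigma_ginv_min_norm:
  assumes Y: "Y \<in> dcmat_carrier n m" and opt: "dc_fro (dc_residual sigma Y) = opt_residual"
  shows "dr_le (dc_fro sigma_ginv) (dc_fro Y)"
  using dc_fro_cdiag_le[of r n m "fst Y" "snd Y"] optimal_residual_diag[OF Y opt] Y r_le_t t_le
  by (cases Y) (simp add: sigma_ginv_eq)

lemma cfro_dual_tail:
  "cfro (mat (t - r) (t - r) (\<lambda>(i,j). if i = j then dual (r + i) else 0)) = snd opt_residual"
proof -
  have "mat (t - r) (t - r) (\<lambda>(i,j). if i = j then dual (r + i) else 0)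
      = cdiag (t - r) (t - r) (t - r) (\<lambda>i. dual (r + i))"
    by (auto intro!: eq_matI)
  moreover have "(\<Sum>i<t - r. (snd (mu (r + i)))\<^sup>2) = (\<Sum>i\<in>{r..<t}. (snd (mu i))\<^sup>2)"
    using sum.shift_bounds_nat_ivl[of "\<lambda>i. (snd (mu i))\<^sup>2" 0 r "t - r"] r_le_t
    by (simp add: atLeast0LessThan add.commute)
  ultimately show ?thesis
    by (simp add: cfro_eq_sqrt_fro_sq fro_sq_cdiag)
qed

end

theorem theorem4p2:
  fixes m n r t :: nat and U V A :: dcmat and mu :: "nat \<Rightarrow> dreal"
  assumes U: "dc_unitary m U" and V: "dc_unitary n V"
    and rt: "r \<le> t" and tmn: "t \<le> min m n"
    and app: "\<And>i. i < r \<Longrightarrow> fst (mu i) > 0"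
    and inf: "\<And>i. r \<le> i \<Longrightarrow> i < t \<Longrightarrow> fst (mu i) = 0 \<and> snd (mu i) > 0"
    and dec: "\<And>i. i + 1 < t \<Longrightarrow> dr_le (mu (i + 1)) (mu i)"
    and svd: "A = dc_mult (dc_mult U (dc_diag m n t mu)) (dc_adj V)"
  defines "AG \<equiv> dc_mult (dc_mult V (dc_diag n m r (\<lambda>i. dr_inv (mu i)))) (dc_adj U)"
  shows "(\<forall>X \<in> dcmat_carrier n m.
            dr_le (dc_fro (dc_minus (dc_mult (dc_mult A AG) A) A))
                  (dc_fro (dc_minus (dc_mult (dc_mult A X) A) A)))
       \<and> (\<forall>X \<in> dcmat_carrier n m.
            dc_fro (dc_minus (dc_mult (dc_mult A X) A) A)
              = dc_fro (dc_minus (dc_mult (dc_mult A AG) A) A)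
            \<longrightarrow> dr_le (dc_fro AG) (dc_fro X))
       \<and> dc_fro (dc_minus (dc_mult (dc_mult A AG) A) A)
           = (0, cfro (mat (t - r) (t - r)
                (\<lambda>(i,j). if i = j then complex_of_real (snd (mu (r + i))) else 0)))
       \<and> (r = t \<longrightarrow> dc_mult (dc_mult A AG) A = A)"
proof -
  interpret dual_singular_values m n r t mu
    using rt tmn app inf by unfold_locales (auto dest: less_imp_neq[symmetric])
  define Y where "Y X = dc_mult (dc_mult (dc_adj V) X) U" for X
  have Y: "Y X \<in> dcmat_carrier n m" and norm: "dc_fro (Y X) = dc_fro X"
    and residual: "dc_fro (dc_residual A X) = dc_fro (dc_residual sigma (Y X))"
    if "X \<in> dcmat_carrier n m" for X
    using dc_unitary_conj_carrier[OF dc_unitary_adj[OF V] dc_unitary_adj[OF U] that]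
      dc_fro_unitary_conj[OF dc_unitary_adj[OF V] dc_unitary_adj[OF U] that]
      dc_fro_residual_unitary_conj[OF U V dc_diag_carrier that]
    by (simp_all add: Y_def svd)
  have AG: "AG \<in> dcmat_carrier n m" "Y AG = sigma_ginv"
    unfolding AG_def Y_def using U V
    by (simp_all add: dc_unitary_conj_carrier dc_diag_carrier dc_unitary_conj_cancel)
  have opt: "dc_fro (dc_residual A AG) = opt_residual"
    using residual[OF AG(1)] AG(2) dc_fro_residual_sigma_ginv by simp
  show ?thesis
  proof (intro conjI ballI impI)
    fix X assume "X \<in> dcmat_carrier n m"
    then show "dr_le (dc_fro (dc_residual A AG)) (dc_fro (dc_residual A X))"
      using opt residual Y opt_residual_le by simp
  next
    fix X assume "X \<in> dcmat_carrier n m" "dc_fro (dc_residual A X) = dc_fro (dc_residual A AG)"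
    then show "dr_le (dc_fro AG) (dc_fro X)"
      using sigma_ginv_min_norm[OF Y] opt residual norm norm[OF AG(1)] AG(2) by simp
  next
    show "dc_fro (dc_residual A AG)
        = (0, cfro (mat (t - r) (t - r) (\<lambda>(i,j). if i = j then dual (r + i) else 0)))"
      using opt cfro_dual_tail by simp
  next
    assume "r = t"
    then show "dc_mult (dc_mult A AG) A = A"
      unfolding svd AG_def
      by (rule dc_residual_unitary_conj_eq_zero[OF U V dc_diag_carrier dc_diag_carrier
            residual_sigma_ginv_zero])
  qed
qed

end
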